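(* Let $I\subsetneq\Delta_\sigma$ be $\lambda_\iota$-connected. Then $I_\iota(I)$ is $\lambda_\iota$-connected. More generally, every $J\subset\Delta_\sigma$ with $J\supset I_\iota(I)$ is $\lambda_\iota$-connected.
   Context: Setting. - $G$ is a connected noncompact semisimple real Lie group with finite center, $\iota:G\to\mathrm{GL}(W)$ is an almost faithful finite-dimensional real representation irreducible over $\mathbb R$, $\sigma$ an involution of $G$, and $H$ a symmetric subgroup for $\sigma$ fixing a nonzero $v_0\in W$. - $\theta$ is a Cartan involution commuting with $\sigma$, $\mathfrak g=\mathfrak k\oplus\mathfrak p=\mathfrak h\oplus\mathfrak q$ the eigenspace decompositions, and $\mathfrak a$ a maximal abelian subspace of $\mathfrak p\cap\mathfrak q$. - $\Sigma_\sigma$ is the restricted root system with root spaces $\mathfrak g_\alpha$, positive roots $\Sigma^+_\sigma$ and simple roots $\Delta_\sigma$. - $2\rho=\sum_{\alpha\in\Sigma_\sigma^+}(\dim\mathfrak g_\alpha)\alpha=\sum_{\alpha\in\Delta_\sigma}u_\alpha\alpha$, and $\lambda_\iota=\sum_{\alpha\in\Delta_\sigma}m_\alpha\alpha$ is the highest weight of $\mathfrak a$ on $W$ (all $u_\alpha,m_\alpha>0$). - $I\subset\Delta_\sigma$ is $\lambda_\iota$-connected if $I\cup\{\lambda_\iota\}$ is not a union of two nonempty subsets orthogonal for the Killing form. - For $\lambda_\iota$-connected $I\subsetneq\Delta_\sigma$: $a_\iota(I)=\max\{u_\alpha/m_\alpha:\alpha\in\Delta_\sigma\setminus I\}$ and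 $I_\iota(I)=I\cup\{\alpha\in\Delta_\sigma\setminus I:u_\alpha/m_\alpha<a_\iota(I)\}$. *)

theory Defs
  imports "HOL-Analysis.Analysis"
begin

text \<open>Abstract combinatorial model of the restricted root system of (g, sigma) on a,
  where a carries the (positive definite) Killing form, modelled as the inner product
  of a Euclidean space; roots are identified with vectors via the Killing form.\<close>

definition refl_vec :: "'v::euclidean_space \<Rightarrow> 'v \<Rightarrow> 'v" where
  "refl_vec \<alpha> \<beta> = \<beta> - (2 * (\<beta> \<bullet> \<alpha>) / (\<alpha> \<bullet> \<alpha>)) *\<^sub>R \<alpha>"

text \<open>A (possibly non-reduced) crystallographic root system; restricted root systems may be non-reduced.\<close>
definition root_system :: "'v::euclidean_space set \<Rightarrow> bool" where
  "root_system \<Phi> \<longleftrightarrow> finite \<Phi> \<and> 0 \<notin> \<Phi> \<and>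
     (\<forall>\<alpha>\<in>\<Phi>. \<forall>\<beta>\<in>\<Phi>. refl_vec \<alpha> \<beta> \<in> \<Phi> \<and> 2 * (\<beta> \<bullet> \<alpha>) / (\<alpha> \<bullet> \<alpha>) \<in> \<int>)"

definition simple_system :: "'v::euclidean_space set \<Rightarrow> 'v set \<Rightarrow> bool" where
  "simple_system \<Phi> \<Delta> \<longleftrightarrow> \<Delta> \<subseteq> \<Phi> \<and> independent \<Delta> \<and>
     (\<forall>\<beta>\<in>\<Phi>. \<exists>c. (\<forall>\<alpha>\<in>\<Delta>. c \<alpha> \<in> \<int>) \<and> \<beta> = (\<Sum>\<alpha>\<in>\<Delta>. c \<alpha> *\<^sub>R \<alpha>) \<and>
        ((\<forall>\<alpha>\<in>\<Delta>. c \<alpha> \<ge> 0) \<or> (\<forall>\<alpha>\<in>\<Delta>. c \<alpha> \<le> 0)))"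

definition pos_roots :: "'v::euclidean_space set \<Rightarrow> 'v set \<Rightarrow> 'v set" where
  "pos_roots \<Phi> \<Delta> = {\<beta>\<in>\<Phi>. \<exists>c. \<beta> = (\<Sum>\<alpha>\<in>\<Delta>. c \<alpha> *\<^sub>R \<alpha>) \<and> (\<forall>\<alpha>\<in>\<Delta>. c \<alpha> \<ge> 0)}"

text \<open>2 rho = sum over positive roots of (dim g_alpha) alpha; dimg alpha = dim g_alpha.\<close>
definition two_rho :: "'v::euclidean_space set \<Rightarrow> 'v set \<Rightarrow> ('v \<Rightarrow> nat) \<Rightarrow> 'v" where
  "two_rho \<Phi> \<Delta> dimg = (\<Sum>\<beta>\<in>pos_roots \<Phi> \<Delta>. real (dimg \<beta>) *\<^sub>R \<beta>)"

definition lam_connected :: "'v::euclidean_space \<Rightarrow> 'v set \<Rightarrow> bool" where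
  "lam_connected lam S \<longleftrightarrow>
     \<not> (\<exists>A B. A \<noteq> {} \<and> B \<noteq> {} \<and> A \<union> B = S \<union> {lam} \<and> A \<inter> B = {} \<and>
           (\<forall>x\<in>A. \<forall>y\<in>B. x \<bullet> y = 0))"

definition a_iota :: "'v set \<Rightarrow> ('v \<Rightarrow> real) \<Rightarrow> ('v \<Rightarrow> real) \<Rightarrow> 'v set \<Rightarrow> real" where
  "a_iota \<Delta> u m I = Max ((\<lambda>\<alpha>. u \<alpha> / m \<alpha>) ` (\<Delta> - I))"

definition I_iota :: "'v set \<Rightarrow> ('v \<Rightarrow> real) \<Rightarrow> ('v \<Rightarrow> real) \<Rightarrow> 'v set \<Rightarrow> 'v set" where
  "I_iota \<Delta> u m I = I \<union> {\<alpha>\<in>\<Delta> - I. u \<alpha> / m \<alpha> < a_iota \<Delta> u m I}"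

end

theory Submission
  imports Defs
begin

text \<open>The reflection in a simple root \<open>\<beta>\<close> permutes the positive roots not proportional to \<open>\<beta>\<close>,
  preserves multiplicities and negates the pairing with \<open>\<beta>\<close>; so only the multiples of \<open>\<beta>\<close>
  contribute to \<open>2\<rho> \<bullet> \<beta>\<close>, and \<open>2\<rho> \<bullet> \<beta> > 0\<close>.

  Let \<open>J \<supseteq> I\<^sub>\<iota>(I)\<close> and suppose \<open>J \<union> {\<lambda>}\<close> splits orthogonally as \<open>A \<union> B\<close> with \<open>\<lambda> \<in> A\<close>.
  Connectedness of \<open>I \<union> {\<lambda>}\<close> forces \<open>B \<subseteq> \<Delta> - I\<close>. With \<open>a = a\<^sub>\<iota>(I)\<close> the coefficients
  \<open>c\<^sub>\<alpha> = u\<^sub>\<alpha> - a m\<^sub>\<alpha>\<close> of \<open>2\<rho> - a\<lambda>\<close> are \<open>\<le> 0\<close> on \<open>\<Delta> - I\<close> and vanish on \<open>\<Delta> - J\<close>. Hence for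
  \<open>\<beta> \<in> B\<close> we get \<open>0 < 2\<rho> \<bullet> \<beta> = (2\<rho> - a\<lambda>) \<bullet> \<beta> = x \<bullet> \<beta>\<close> with \<open>x = \<Sum>\<^bsub>\<gamma>\<in>B\<^esub> c\<^sub>\<gamma> \<gamma>\<close>,
  whereas \<open>x \<bullet> x = \<Sum>\<^bsub>\<gamma>\<in>B\<^esub> c\<^sub>\<gamma> (\<gamma> \<bullet> x) \<le> 0\<close>, a contradiction.\<close>

lemma independent_combination_eq_scaleR:
  fixes D :: "'v::real_vector set"
  assumes "finite D" "independent D" "b \<in> D" "a \<in> D"
    and "(\<Sum>x\<in>D. c x *\<^sub>R x) = t *\<^sub>R b"
  shows "c a = (if a = b then t else 0)"
proof (rule ccontr)
  let ?d = "\<lambda>x. c x - (if x = b then t else 0)"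
  assume "c a \<noteq> (if a = b then t else 0)"
  then have "\<exists>x\<in>D. ?d x \<noteq> 0" using assms(4) by (intro bexI[of _ a]) auto
  moreover have "(\<Sum>x\<in>D. ?d x *\<^sub>R x) = 0"
    using assms(1,3,5)
    by (simp add: scaleR_diff_left sum_subtractf if_distrib[of "\<lambda>x. x *\<^sub>R _"] cong: if_cong)
  ultimately have "dependent D"
    unfolding real_vector.dependent_finite[OF assms(1)] by (intro exI[of _ ?d] conjI)
  with assms(2) show False by simp
qed

lemma nonpos_combination_inner_nonpos:
  fixes B :: "'v::real_inner set"
  assumes "finite B" "B \<noteq> {}" "\<forall>g\<in>B. c g \<le> 0"
  shows "\<exists>b\<in>B. (\<Sum>g\<in>B. c g *\<^sub>R g) \<bullet> b \<le> 0"
proof (rule ccontr)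
  define x where "x = (\<Sum>g\<in>B. c g *\<^sub>R g)"
  assume "\<not> ?thesis"
  then have pos: "x \<bullet> b > 0" if "b \<in> B" for b
    using that unfolding x_def by force
  have "x \<bullet> x = (\<Sum>g\<in>B. c g * (g \<bullet> x))"
    unfolding x_def by (simp add: inner_sum_left)
  also have "\<dots> \<le> 0"
    using assms(3) pos by (intro sum_nonpos mult_nonpos_nonneg) (auto simp: inner_commute less_imp_le)
  finally have "x = 0" by (metis inner_gt_zero_iff not_le)
  with pos assms(2) show False by force
qed

lemma inner_combination_restrict:
  fixes D B :: "'v::real_inner set"
  assumes "finite D" "B \<subseteq> D" "\<forall>x\<in>D - B. c x = 0 \<or> x \<bullet> b = 0"
  shows "(\<Sum>x\<in>D. c x *\<^sub>R x) \<bullet> b = (\<Sum>x\<in>B. c x *\<^sub>R x) \<bullet> b"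
  unfolding inner_sum_left using assms by (intro sum.mono_neutral_right) auto

lemma refl_vec_inner:
  assumes "b \<noteq> 0"
  shows "refl_vec b g \<bullet> b = - (g \<bullet> b)"
  using assms by (simp add: refl_vec_def inner_diff_left algebra_simps)

lemma refl_vec_refl_vec:
  assumes "b \<noteq> 0"
  shows "refl_vec b (refl_vec b g) = g"
  using refl_vec_inner[OF assms, of g] by (simp add: refl_vec_def)

lemma refl_vec_in_span_iff: "refl_vec b g \<in> span {b} \<longleftrightarrow> g \<in> span {b}"
proof -
  have "(2 * (g \<bullet> b) / (b \<bullet> b)) *\<^sub>R b \<in> span {b}" by (simp add: span_base span_mul)
  then show ?thesis unfolding refl_vec_def by (metis diff_add_cancel span_add span_diff)
qed

lemma simple_system_finite:
  assumes "root_system \<Phi>" "simple_system \<Phi> \<Delta>"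
  shows "finite \<Delta>"
  using assms finite_subset unfolding root_system_def simple_system_def by blast

lemma simple_root_pos_root:
  assumes "root_system \<Phi>" "simple_system \<Phi> \<Delta>" "\<beta> \<in> \<Delta>"
  shows "\<beta> \<in> pos_roots \<Phi> \<Delta>"
proof -
  have "\<beta> = (\<Sum>\<alpha>\<in>\<Delta>. (if \<alpha> = \<beta> then 1 else 0) *\<^sub>R \<alpha>)"
    using simple_system_finite[OF assms(1,2)] assms(3)
    by (simp add: if_distrib[of "\<lambda>x. x *\<^sub>R _"] cong: if_cong)
  moreover have "\<beta> \<in> \<Phi>" using assms(2,3) unfolding simple_system_def by blast
  ultimately show ?thesis
    unfolding pos_roots_def by (intro CollectI conjI exI[of _ "\<lambda>\<alpha>. if \<alpha> = \<beta> then 1 else 0"]) auto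
qed

lemma pos_root_in_span_simple_inner_nonneg:
  assumes "root_system \<Phi>" "simple_system \<Phi> \<Delta>" "\<beta> \<in> \<Delta>"
    and "g \<in> pos_roots \<Phi> \<Delta>" "g \<in> span {\<beta>}"
  shows "g \<bullet> \<beta> \<ge> 0"
proof -
  obtain t where t: "g = t *\<^sub>R \<beta>"
    using assms(5) by (auto simp: real_vector.span_singleton)
  obtain c where c: "g = (\<Sum>\<alpha>\<in>\<Delta>. c \<alpha> *\<^sub>R \<alpha>)" and c_nonneg: "\<forall>\<alpha>\<in>\<Delta>. c \<alpha> \<ge> 0"
    using assms(4) unfolding pos_roots_def by blast
  have "c \<beta> = t"
    using independent_combination_eq_scaleR[of \<Delta> \<beta> \<beta> c t] assms(2,3) c t
      simple_system_finite[OF assms(1,2)] unfolding simple_system_def by simp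
  with c_nonneg assms(3) have "t \<ge> 0" by auto
  then show ?thesis by (simp add: t)
qed

lemma refl_simple_root_pos_root:
  assumes "root_system \<Phi>" "simple_system \<Phi> \<Delta>" "\<beta> \<in> \<Delta>"
    and "g \<in> pos_roots \<Phi> \<Delta>" "g \<notin> span {\<beta>}"
  shows "refl_vec \<beta> g \<in> pos_roots \<Phi> \<Delta>"
proof -
  have fin: "finite \<Delta>" using simple_system_finite[OF assms(1,2)] .
  have ind: "independent \<Delta>" and \<Delta>_roots: "\<Delta> \<subseteq> \<Phi>" using assms(2) unfolding simple_system_def by auto
  obtain c where c: "g = (\<Sum>\<alpha>\<in>\<Delta>. c \<alpha> *\<^sub>R \<alpha>)" and c_nonneg: "\<forall>\<alpha>\<in>\<Delta>. c \<alpha> \<ge> 0"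
    using assms(4) unfolding pos_roots_def by blast
  obtain a where a: "a \<in> \<Delta>" "a \<noteq> \<beta>" "c a > 0"
  proof -
    have "\<exists>a\<in>\<Delta>. a \<noteq> \<beta> \<and> c a \<noteq> 0"
    proof (rule ccontr)
      assume "\<not> ?thesis"
      then have "c \<alpha> = 0" if "\<alpha> \<in> \<Delta>" "\<alpha> \<noteq> \<beta>" for \<alpha>
        using that by blast
      then have "c \<alpha> *\<^sub>R \<alpha> \<in> span {\<beta>}" if "\<alpha> \<in> \<Delta>" for \<alpha>
        using that by (cases "\<alpha> = \<beta>") (simp_all add: span_base span_mul real_vector.span_zero)
      then have "g \<in> span {\<beta>}" unfolding c by (intro span_sum) auto
      with assms(5) show False ..
    qed
    with c_nonneg that show ?thesis by force
  qed
  have s_root: "refl_vec \<beta> g \<in> \<Phi>"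
    using assms(1,3,4) \<Delta>_roots unfolding root_system_def pos_roots_def by blast
  then obtain d where d: "refl_vec \<beta> g = (\<Sum>\<alpha>\<in>\<Delta>. d \<alpha> *\<^sub>R \<alpha>)"
    and d_sign: "(\<forall>\<alpha>\<in>\<Delta>. d \<alpha> \<ge> 0) \<or> (\<forall>\<alpha>\<in>\<Delta>. d \<alpha> \<le> 0)"
    using assms(2) unfolding simple_system_def by blast
  \<comment> \<open>the reflection only moves the \<open>\<beta>\<close>-coordinate, so the positive \<open>a\<close>-coordinate survives\<close>
  define k where "k = 2 * (g \<bullet> \<beta>) / (\<beta> \<bullet> \<beta>)"
  have "(\<Sum>\<alpha>\<in>\<Delta>. (d \<alpha> - c \<alpha>) *\<^sub>R \<alpha>) = refl_vec \<beta> g - g"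
    by (simp add: scaleR_diff_left sum_subtractf flip: c d)
  also have "\<dots> = (- k) *\<^sub>R \<beta>"
    by (simp add: refl_vec_def k_def)
  finally have "d a = c a"
    using independent_combination_eq_scaleR[OF fin ind assms(3) a(1), of "\<lambda>\<alpha>. d \<alpha> - c \<alpha>" "- k"] a(2)
    by simp
  with d_sign a have "\<forall>\<alpha>\<in>\<Delta>. d \<alpha> \<ge> 0" by force
  with s_root d show ?thesis unfolding pos_roots_def by blast
qed

lemma two_rho_inner_simple_root_pos:
  assumes "root_system \<Phi>" "simple_system \<Phi> \<Delta>" "\<beta> \<in> \<Delta>"
    and dimg_pos: "\<forall>\<alpha>\<in>\<Phi>. dimg \<alpha> > 0"
    and dimg_refl: "\<forall>\<alpha>\<in>\<Phi>. \<forall>\<gamma>\<in>\<Phi>. dimg (refl_vec \<alpha> \<gamma>) = dimg \<gamma>"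
  shows "two_rho \<Phi> \<Delta> dimg \<bullet> \<beta> > 0"
proof -
  define P where "P = pos_roots \<Phi> \<Delta>"
  define N where "N = P - span {\<beta>}"
  define f where "f g = real (dimg g) * (g \<bullet> \<beta>)" for g
  define s where "s = refl_vec \<beta>"
  have P_roots: "P \<subseteq> \<Phi>" unfolding P_def pos_roots_def by auto
  have fin: "finite P" using P_roots assms(1) finite_subset unfolding root_system_def by blast
  have \<beta>_root: "\<beta> \<in> \<Phi>" using assms(2,3) unfolding simple_system_def by blast
  then have \<beta>_nz: "\<beta> \<noteq> 0" using assms(1) unfolding root_system_def by blast
  have s_invol: "s (s g) = g" for g unfolding s_def using refl_vec_refl_vec[OF \<beta>_nz] .
  have s_maps: "s g \<in> N" if "g \<in> N" for g
    using that refl_simple_root_pos_root[OF assms(1-3)] refl_vec_in_span_iff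
    unfolding s_def P_def N_def by blast
  have f_s: "f (s g) = - f g" if "g \<in> N" for g
    using that P_roots dimg_refl \<beta>_root refl_vec_inner[OF \<beta>_nz, of g]
    unfolding f_def s_def N_def by auto
  have "sum f N = sum (f \<circ> s) N"
    by (rule sum.reindex_bij_witness[where i=s and j=s]) (auto simp: s_invol s_maps)
  also have "\<dots> = - sum f N"
    using f_s by (simp add: sum_negf)
  finally have N_zero: "sum f N = 0" by simp
  have \<beta>_in: "\<beta> \<in> P \<inter> span {\<beta>}"
    using simple_root_pos_root[OF assms(1-3)] span_base unfolding P_def by blast
  have "f \<beta> > 0" using dimg_pos \<beta>_root \<beta>_nz unfolding f_def by simp
  moreover have "f g \<ge> 0" if "g \<in> P \<inter> span {\<beta>}" for g
    using that pos_root_in_span_simple_inner_nonneg[OF assms(1-3)] unfolding f_def P_def by simp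
  ultimately have M_pos: "sum f (P \<inter> span {\<beta>}) > 0"
    using fin \<beta>_in by (intro sum_pos2[of _ \<beta>]) auto
  have "two_rho \<Phi> \<Delta> dimg \<bullet> \<beta> = sum f P"
    unfolding two_rho_def P_def f_def by (simp add: inner_sum_left)
  also have "\<dots> = sum f (P \<inter> span {\<beta>}) + sum f N"
    unfolding N_def using fin by (rule sum.Int_Diff)
  finally show ?thesis using N_zero M_pos by simp
qed

lemma lam_connectedI:
  assumes "\<And>A B. lam \<in> A \<Longrightarrow> B \<noteq> {} \<Longrightarrow> A \<union> B = S \<union> {lam} \<Longrightarrow> A \<inter> B = {} \<Longrightarrow>
      \<forall>x\<in>A. \<forall>y\<in>B. x \<bullet> y = 0 \<Longrightarrow> False"
  shows "lam_connected lam S"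
  unfolding lam_connected_def
proof clarify
  fix A B :: "'a set"
  assume split: "A \<noteq> {}" "B \<noteq> {}" "A \<union> B = S \<union> {lam}" "A \<inter> B = {}"
    and orth: "\<forall>x\<in>A. \<forall>y\<in>B. x \<bullet> y = 0"
  show False
  proof (cases "lam \<in> A")
    case True
    with assms split orth show False by blast
  next
    case False
    with split have "lam \<in> B" by blast
    moreover have "\<forall>x\<in>B. \<forall>y\<in>A. x \<bullet> y = 0" using orth by (metis inner_commute)
    ultimately show False using assms[of B A] split by blast
  qed
qed

lemma lam_connected_split_disjoint:
  assumes "lam_connected lam I" "I \<subseteq> A \<union> B" "A \<inter> B = {}"
    and "\<forall>x\<in>A. \<forall>y\<in>B. x \<bullet> y = 0" "lam \<in> A"
  shows "B \<inter> I = {}"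
proof (rule ccontr)
  assume "B \<inter> I \<noteq> {}"
  define A' where "A' = A \<inter> (I \<union> {lam})"
  define B' where "B' = B \<inter> (I \<union> {lam})"
  have "A' \<noteq> {}" "B' \<noteq> {}"
    using \<open>B \<inter> I \<noteq> {}\<close> assms(5) unfolding A'_def B'_def by auto
  moreover have "A' \<union> B' = I \<union> {lam}" "A' \<inter> B' = {}" "\<forall>x\<in>A'. \<forall>y\<in>B'. x \<bullet> y = 0"
    using assms(2-5) unfolding A'_def B'_def by auto
  ultimately show False
    using assms(1) unfolding lam_connected_def by blast
qed

lemma a_iota_ge:
  assumes "finite \<Delta>" "\<alpha> \<in> \<Delta> - I"
  shows "u \<alpha> / m \<alpha> \<le> a_iota \<Delta> u m I"
  unfolding a_iota_def using assms by (intro Max_ge) auto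

lemma a_iota_eq_outside:
  assumes "finite \<Delta>" "I_iota \<Delta> u m I \<subseteq> J" "\<alpha> \<in> \<Delta> - J"
  shows "u \<alpha> / m \<alpha> = a_iota \<Delta> u m I"
  using assms a_iota_ge[OF assms(1), of \<alpha> I u m] unfolding I_iota_def by force

lemma lam_connected_superset_I_iota:
  fixes \<Delta> I J :: "'v::euclidean_space set"
  assumes fin: "finite \<Delta>"
    and rho_pos: "\<forall>\<beta>\<in>\<Delta>. (\<Sum>\<alpha>\<in>\<Delta>. u \<alpha> *\<^sub>R \<alpha>) \<bullet> \<beta> > 0"
    and lam: "lam = (\<Sum>\<alpha>\<in>\<Delta>. m \<alpha> *\<^sub>R \<alpha>)" and m_pos: "\<forall>\<alpha>\<in>\<Delta>. m \<alpha> > 0"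
    and conn: "lam_connected lam I"
    and J: "I_iota \<Delta> u m I \<subseteq> J" "J \<subseteq> \<Delta>"
  shows "lam_connected lam J"
proof (rule lam_connectedI)
  fix A B
  assume lam_A: "lam \<in> A" and B: "B \<noteq> {}" and split: "A \<union> B = J \<union> {lam}" "A \<inter> B = {}"
    and orth: "\<forall>x\<in>A. \<forall>y\<in>B. x \<bullet> y = 0"
  define a where "a = a_iota \<Delta> u m I"
  define c where "c \<alpha> = u \<alpha> - a * m \<alpha>" for \<alpha>
  have "I \<subseteq> J" using J(1) unfolding I_iota_def by auto
  with split(1) have "I \<subseteq> A \<union> B" by auto
  then have "B \<inter> I = {}" by (rule lam_connected_split_disjoint[OF conn _ split(2) orth lam_A])
  moreover have "B \<subseteq> J" using split lam_A by auto
  ultimately have B_sub: "B \<subseteq> \<Delta> - I" using J(2) by auto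
  then have finB: "finite B" using fin finite_subset by auto
  have c_nonpos: "\<forall>\<gamma>\<in>B. c \<gamma> \<le> 0"
  proof
    fix \<gamma> assume "\<gamma> \<in> B"
    with B_sub have "\<gamma> \<in> \<Delta> - I" by auto
    with a_iota_ge[OF fin this, of u m] m_pos show "c \<gamma> \<le> 0"
      by (simp add: c_def a_def pos_divide_le_eq)
  qed
  have c_zero: "c \<alpha> = 0" if "\<alpha> \<in> \<Delta> - J" for \<alpha>
  proof -
    have "m \<alpha> \<noteq> 0" using that m_pos by force
    with a_iota_eq_outside[OF fin J(1) that] show ?thesis
      by (simp add: c_def a_def divide_eq_eq)
  qed
  have c_comb: "(\<Sum>\<alpha>\<in>\<Delta>. c \<alpha> *\<^sub>R \<alpha>) = (\<Sum>\<alpha>\<in>\<Delta>. u \<alpha> *\<^sub>R \<alpha>) - a *\<^sub>R lam"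
    unfolding lam c_def by (simp add: scaleR_diff_left sum_subtractf scaleR_sum_right)
  have rho_B: "(\<Sum>\<alpha>\<in>\<Delta>. u \<alpha> *\<^sub>R \<alpha>) \<bullet> b = (\<Sum>\<gamma>\<in>B. c \<gamma> *\<^sub>R \<gamma>) \<bullet> b" if b: "b \<in> B" for b
  proof -
    have "\<forall>\<alpha>\<in>\<Delta> - B. c \<alpha> = 0 \<or> \<alpha> \<bullet> b = 0"
      using c_zero orth b split(1) by auto
    then have "(\<Sum>\<alpha>\<in>\<Delta>. c \<alpha> *\<^sub>R \<alpha>) \<bullet> b = (\<Sum>\<gamma>\<in>B. c \<gamma> *\<^sub>R \<gamma>) \<bullet> b"
      using B_sub fin by (intro inner_combination_restrict) auto
    moreover have "lam \<bullet> b = 0" using orth lam_A b by simp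
    ultimately show ?thesis using c_comb by (simp add: inner_diff_left)
  qed
  obtain b where "b \<in> B" "(\<Sum>\<gamma>\<in>B. c \<gamma> *\<^sub>R \<gamma>) \<bullet> b \<le> 0"
    using nonpos_combination_inner_nonpos[OF finB B c_nonpos] by auto
  moreover have "b \<in> \<Delta>" using B_sub \<open>b \<in> B\<close> by auto
  ultimately show False using rho_pos rho_B by fastforce
qed

theorem proposition5p2:
  fixes \<Phi> \<Delta> I :: "'v::euclidean_space set"
    and dimg :: "'v \<Rightarrow> nat" and u m :: "'v \<Rightarrow> real" and lam :: 'v
  assumes "root_system \<Phi>"
    and "simple_system \<Phi> \<Delta>"
    and "\<forall>\<alpha>\<in>\<Phi>. dimg \<alpha> > 0"
    and "\<forall>\<alpha>\<in>\<Phi>. \<forall>\<beta>\<in>\<Phi>. dimg (refl_vec \<alpha> \<beta>) = dimg \<beta>"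
    and "two_rho \<Phi> \<Delta> dimg = (\<Sum>\<alpha>\<in>\<Delta>. u \<alpha> *\<^sub>R \<alpha>)"
    and "\<forall>\<alpha>\<in>\<Delta>. u \<alpha> > 0"
    and "lam = (\<Sum>\<alpha>\<in>\<Delta>. m \<alpha> *\<^sub>R \<alpha>)"
    and "\<forall>\<alpha>\<in>\<Delta>. m \<alpha> > 0"
    and "\<forall>\<alpha>\<in>\<Delta>. lam \<bullet> \<alpha> \<ge> 0"
    and "I \<subset> \<Delta>"
    and "lam_connected lam I"
  shows "lam_connected lam (I_iota \<Delta> u m I) \<and>
         (\<forall>J. I_iota \<Delta> u m I \<subseteq> J \<and> J \<subseteq> \<Delta> \<longrightarrow> lam_connected lam J)"
proof -
  have fin: "finite \<Delta>" using simple_system_finite[OF assms(1,2)] .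
  have rho_pos: "\<forall>\<beta>\<in>\<Delta>. (\<Sum>\<alpha>\<in>\<Delta>. u \<alpha> *\<^sub>R \<alpha>) \<bullet> \<beta> > 0"
    using two_rho_inner_simple_root_pos[OF assms(1,2) _ assms(3,4)] assms(5) by simp
  have "\<forall>J. I_iota \<Delta> u m I \<subseteq> J \<and> J \<subseteq> \<Delta> \<longrightarrow> lam_connected lam J"
    using lam_connected_superset_I_iota[OF fin rho_pos assms(7,8,11)] by blast
  moreover have "I_iota \<Delta> u m I \<subseteq> \<Delta>" using assms(10) unfolding I_iota_def by auto
  ultimately show ?thesis by blast
qed

end
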